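(* Let $T$ be a pruned tree on $\{0,1\}$, let $\psi:T\to(0;1)$, and let $(D_t)_{t\in T}$ be a compliant family with $\mu(\operatorname{Int}D_t)=\mu(\operatorname{Cl}D_t)=\psi(t)$ for all $t\in T$. Let $K_T$ and $O_T$ be the closed and open offspring of $T$ determined by $(D_t)_{t\in T}$, and write $\mathcal{D}$ for $\mathcal{D}_{K_T}=\mathcal{D}_{O_T}$. Then for all $z\in2^\omega$: if $z\notin\overline{[T]}$ then $\mathcal{D}(z)\in\{0,1\}$; and if $z=\overline{x}$ with $x\in[T]$, then $\mathcal{D}(z)$ is defined if and only if $\lim_{n\to\infty}\psi(x\restriction n)$ exists, and in that case $\mathcal{D}(z)=\lim_{n\to\infty}\psi(x\restriction n)$.
   Context: $2^{\omega}$ is the Cantor space; $N_s=\{x\in2^\omega:s\subset x\}$; $\mu$ is the coin-tossing measure, $\mu(N_s)=2^{-\mathrm{lh}(s)}$. For measurable $A$, $\mathcal{D}_A(z)=\lim_n\mu(A\cap N_{z\restriction n})/\mu(N_{z\restriction n})$ when the limit exists. $A$ is dualistic if $\mathcal{D}_A(z)$ exists and lies in $\{0,1\}$ for every $z$. A pruned tree on $\{0,1\}$ is a nonempty set of finite binary sequences closed under initial segments in which every node has a proper extension; $[T]$ is its set of infinite branches. The stretch of $s\in 2^{\le\omega}$ is $\overline{s}=s(0)^{(1)}{}^\frown s(1)^{(2)}{}^\frown s(2)^{(3)}{}^\frown\cdots$, where $i^{(k)}$ is the sequence of $k$ copies of $i$ (so $s(j)$ is repeated $j+1$ times); $\overline{X}=\{\overline{x}:x\in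 X\}$. For $n\in\omega$, $\mathrm{Fl}(n)=2^{n+1}\setminus\{0^{(n+1)},1^{(n+1)}\}$ (binary sequences of length $n+1$ that are not constant). For $s$ finite and $X\subseteq2^\omega$, $s^\frown X=\{s^\frown x:x\in X\}$. A family $(D_t)_{t\in T}$ of subsets of $2^\omega$ is compliant if each $D_t$ is dualistic, $\emptyset\ne D_t\ne2^\omega$, and $\mu(\operatorname{Int}D_t)=\mu(\operatorname{Cl}D_t)$. The closed offspring is $K_T=\overline{[T]}\cup\bigcup\{\overline{t}^\frown a^\frown\operatorname{Cl}D_t:t\in T,\ a\in\mathrm{Fl}(\mathrm{lh}\,t)\}$ and the open offspring is $O_T=\bigcup\{\overline{t}^\frown a^\frown\operatorname{Int}D_t:t\in T,\ a\in\mathrm{Fl}(\mathrm{lh}\,t)\}$; these differ by a null set so have the same density function. *)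

theory Defs
  imports "HOL-Probability.Probability"
begin

definition init :: "(nat \<Rightarrow> bool) \<Rightarrow> nat \<Rightarrow> bool list" where
  "init x n = map x [0..<n]"

definition cyl :: "bool list \<Rightarrow> (nat \<Rightarrow> bool) set" where
  "cyl s = {x. init x (length s) = s}"

definition mu :: "(nat \<Rightarrow> bool) measure" where
  "mu = PiM UNIV (\<lambda>_. measure_pmf (bernoulli_pmf (1/2)))"

text \<open>Interior and closure in the Cantor topology (basic opens are the cylinders).\<close>
definition cInt :: "(nat \<Rightarrow> bool) set \<Rightarrow> (nat \<Rightarrow> bool) set" where
  "cInt A = {x. \<exists>n. cyl (init x n) \<subseteq> A}"

definition cCl :: "(nat \<Rightarrow> bool) set \<Rightarrow> (nat \<Rightarrow> bool) set" where
  "cCl A = {x. \<forall>n. cyl (init x n) \<inter> A \<noteq> {}}"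

definition dens_seq :: "(nat \<Rightarrow> bool) set \<Rightarrow> (nat \<Rightarrow> bool) \<Rightarrow> nat \<Rightarrow> real" where
  "dens_seq A z n = measure mu (A \<inter> cyl (init z n)) / measure mu (cyl (init z n))"

definition dens_defined :: "(nat \<Rightarrow> bool) set \<Rightarrow> (nat \<Rightarrow> bool) \<Rightarrow> bool" where
  "dens_defined A z = convergent (dens_seq A z)"

definition dens :: "(nat \<Rightarrow> bool) set \<Rightarrow> (nat \<Rightarrow> bool) \<Rightarrow> real" where
  "dens A z = lim (dens_seq A z)"

definition dualistic :: "(nat \<Rightarrow> bool) set \<Rightarrow> bool" where
  "dualistic A \<longleftrightarrow> A \<in> sets mu \<and>
     (\<forall>z. dens_defined A z \<and> dens A z \<in> {0, 1})"

definition pruned_tree :: "bool list set \<Rightarrow> bool" where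
  "pruned_tree T \<longleftrightarrow> T \<noteq> {} \<and>
     (\<forall>t\<in>T. \<forall>s. prefix s t \<longrightarrow> s \<in> T) \<and>
     (\<forall>t\<in>T. \<exists>u\<in>T. strict_prefix t u)"

definition branches :: "bool list set \<Rightarrow> (nat \<Rightarrow> bool) set" where
  "branches T = {x. \<forall>n. init x n \<in> T}"

definition stretch_list :: "bool list \<Rightarrow> bool list" where
  "stretch_list s = concat (map (\<lambda>j. replicate (Suc j) (s ! j)) [0..<length s])"

definition stretch :: "(nat \<Rightarrow> bool) \<Rightarrow> (nat \<Rightarrow> bool)" where
  "stretch x = (\<lambda>m. stretch_list (init x (Suc m)) ! m)"

definition Fl :: "nat \<Rightarrow> bool list set" where
  "Fl n = {a. length a = Suc n \<and> a \<noteq> replicate (Suc n) False \<and> a \<noteq> replicate (Suc n) True}"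

definition conc :: "bool list \<Rightarrow> (nat \<Rightarrow> bool) \<Rightarrow> (nat \<Rightarrow> bool)" where
  "conc s x = (\<lambda>i. if i < length s then s ! i else x (i - length s))"

definition compliant :: "bool list set \<Rightarrow> (bool list \<Rightarrow> (nat \<Rightarrow> bool) set) \<Rightarrow> bool" where
  "compliant T D \<longleftrightarrow> (\<forall>t\<in>T. dualistic (D t) \<and> D t \<noteq> {} \<and> D t \<noteq> UNIV \<and>
      measure mu (cInt (D t)) = measure mu (cCl (D t)))"

definition closed_offspring :: "bool list set \<Rightarrow> (bool list \<Rightarrow> (nat \<Rightarrow> bool) set) \<Rightarrow> (nat \<Rightarrow> bool) set" where
  "closed_offspring T D = stretch ` branches T \<union>
     (\<Union>t\<in>T. \<Union>a\<in>Fl (length t). conc (stretch_list t @ a) ` cCl (D t))"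

definition open_offspring :: "bool list set \<Rightarrow> (bool list \<Rightarrow> (nat \<Rightarrow> bool) set) \<Rightarrow> (nat \<Rightarrow> bool) set" where
  "open_offspring T D = (\<Union>t\<in>T. \<Union>a\<in>Fl (length t). conc (stretch_list t @ a) ` cInt (D t))"

end

theory Submission
  imports Defs
begin

text \<open>
  A stretched point is constant on the blocks \<open>[1+\<dots>+n, 1+\<dots>+(n+1))\<close>.
  A point off the stretched branches eventually leaves them: either through a constant block,
  into the cylinder of the stretch of some \<open>s \<notin> T\<close>, where the offspring is empty, or through
  a non-constant block, into a piece, where the offspring is a copy of \<open>Cl D\<^sub>t\<close> and so has
  density \<open>0\<close> or \<open>1\<close> because \<open>D\<^sub>t\<close> is dualistic. Along the stretch of a branch \<open>x\<close>, the
  cylinder of the stretch of \<open>x \<restriction> n\<close> splits into \<open>2\<^sup>n\<^sup>+\<^sup>1\<close> subcylinders, all pieces of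
  relative measure \<open>\<psi>(x \<restriction> n)\<close> except the two constant ones; hence the density there is within
  \<open>2\<^sup>-\<^sup>n\<close> of \<open>\<psi>(x \<restriction> n)\<close>, and inside the following block it stays at least as close to
  \<open>\<psi>(x \<restriction> n)\<close> as at the block's end. So the densities along the stretch converge
  exactly when \<open>\<psi>(x \<restriction> n)\<close> does, to the same limit.
\<close>

section \<open>The coin-tossing measure\<close>

interpretation bernoulli_seq: sequence_space "measure_pmf (bernoulli_pmf (1/2))"
  by unfold_locales (simp add: prob_space_measure_pmf)

interpretation mu: prob_space mu
  unfolding mu_def by (rule prob_space_PiM) (simp add: prob_space_measure_pmf)

lemma space_mu [simp]: "space mu = UNIV"
  by (simp add: mu_def space_PiM)

lemma length_init [simp]: "length (init x n) = n"
  by (simp add: init_def)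

lemma nth_init [simp]: "i < n \<Longrightarrow> init x n ! i = x i"
  by (simp add: init_def)

lemma init_Suc: "init x (Suc n) = init x n @ [x n]"
  by (simp add: init_def)

lemma init_take: "m \<le> n \<Longrightarrow> init z m = take m (init z n)"
  by (simp add: init_def take_map)

definition shift :: "nat \<Rightarrow> (nat \<Rightarrow> bool) \<Rightarrow> (nat \<Rightarrow> bool)" where
  "shift k z = (\<lambda>i. z (i + k))"

lemma init_add: "init x (a + b) = init x a @ init (shift a x) b"
  by (rule nth_equalityI) (auto simp: nth_append shift_def)

lemma shift_conc [simp]: "shift (length s) (conc s w) = w"
  by (simp add: shift_def conc_def)

lemma init_conc: "init (conc s w) (length s) = s"
  by (rule nth_equalityI) (simp_all add: init_def conc_def)

lemma mem_cyl_iff: "z \<in> cyl s \<longleftrightarrow> init z (length s) = s"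
  by (simp add: cyl_def)

lemma mem_cyl_init [simp]: "x \<in> cyl (init x n)"
  by (simp add: mem_cyl_iff)

lemma conc_in_cyl: "conc s w \<in> cyl s"
  by (simp add: mem_cyl_iff init_conc)

lemma cyl_Nil [simp]: "cyl [] = UNIV"
  by (auto simp: mem_cyl_iff init_def)

lemma cyl_append_subset: "cyl (s @ u) \<subseteq> cyl s"
  by (auto simp: mem_cyl_iff init_add)

lemma conc_eq_conc_iff:
  "length s = length s' \<Longrightarrow> conc s w = conc s' w' \<longleftrightarrow> s = s' \<and> w = w'"
  by (metis init_conc shift_conc)

lemma conc_image: "conc s ` A = cyl s \<inter> shift (length s) -` A"
proof (intro set_eqI iffI)
  fix z assume z: "z \<in> cyl s \<inter> shift (length s) -` A"
  have "z = conc s (shift (length s) z)"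
  proof
    fix i show "z i = conc s (shift (length s) z) i"
      using z by (auto simp: conc_def shift_def cyl_def init_def dest!: arg_cong[where f="\<lambda>l. l ! i"])
  qed
  with z show "z \<in> conc s ` A" by auto
qed (auto simp: conc_in_cyl)

lemma conc_image_Int_cyl: "conc s ` C \<inter> cyl (s @ u) = conc s ` (C \<inter> cyl u)"
proof -
  have "conc s w \<in> cyl (s @ u) \<longleftrightarrow> w \<in> cyl u" for w
    using init_add[of "conc s w" "length s" "length u"] by (simp add: mem_cyl_iff init_conc)
  then show ?thesis by blast
qed

lemma countable_bool_lists: "countable (S :: bool list set)"
  by (rule countable_subset[OF subset_UNIV]) simp

lemma cyl_eq_prod_emb:
  "cyl s = prod_emb UNIV (\<lambda>_. measure_pmf (bernoulli_pmf (1/2))) {..<length s}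
             (PiE {..<length s} (\<lambda>j. {s!j}))"
proof -
  have "prod_emb UNIV (\<lambda>_. measure_pmf (bernoulli_pmf (1/2))) {..<length s} (PiE {..<length s} (\<lambda>j. {s!j}))
     = PiE UNIV (\<lambda>i. if i \<in> {..<length s} then {s!i} else space (measure_pmf (bernoulli_pmf (1/2))))"
    by (rule prod_emb_PiE) auto
  also have "\<dots> = cyl s"
    unfolding cyl_def list_eq_iff_nth_eq
    by (auto simp: PiE_UNIV_domain Pi_iff) (metis lessThan_iff singletonD)+
  finally show ?thesis ..
qed

lemma sets_cyl [measurable]: "cyl s \<in> sets mu"
  unfolding cyl_eq_prod_emb mu_def by (intro sets_PiM_I) auto

lemma measure_cyl: "measure mu (cyl s) = (1/2) ^ length s"
proof -
  have "emeasure mu (cyl s) = (\<Prod>i\<in>{..<length s}. emeasure (measure_pmf (bernoulli_pmf (1/2))) {s!i})"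
    unfolding cyl_eq_prod_emb mu_def
    by (rule emeasure_PiM_emb) (auto simp: prob_space_measure_pmf)
  also have "\<dots> = ennreal (1/2) ^ length s"
    by (simp add: emeasure_pmf_single)
  also have "\<dots> = ennreal ((1/2) ^ length s)"
    by (rule ennreal_power) simp
  finally show ?thesis by (simp add: measure_def)
qed

lemma sets_init_preimage: "{z. init z m \<in> S} \<in> sets mu"
proof -
  have "{z. init z m \<in> S} = (\<Union>s\<in>{s\<in>S. length s = m}. cyl s)"
    by (auto simp: mem_cyl_iff)
  then show ?thesis by (simp add: sets.countable_UN' countable_bool_lists)
qed

lemma measurable_shift [measurable]: "shift k \<in> measurable mu mu"
  unfolding mu_def shift_def by (rule measurable_PiM_single') (auto simp: space_PiM)

lemma sets_conc_image [measurable]: "A \<in> sets mu \<Longrightarrow> conc s ` A \<in> sets mu"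
proof -
  assume "A \<in> sets mu"
  then have "shift (length s) -` A \<in> sets mu"
    using measurable_sets[OF measurable_shift] by fastforce
  then show ?thesis
    unfolding conc_image by (intro sets.Int sets_cyl)
qed

text \<open>The map \<open>(\<omega>, \<omega>') \<mapsto> conc (init \<omega> n) \<omega>'\<close> pushes \<open>mu \<Otimes> mu\<close> forward to \<open>mu\<close>.\<close>

lemma emeasure_conc_image:
  assumes A: "A \<in> sets mu"
  shows "emeasure mu (conc s ` A) = emeasure mu (cyl s) * emeasure mu A"
proof -
  let ?f = "\<lambda>(\<omega>, \<omega>'). comb_seq (length s) \<omega> \<omega>'"
  have f: "?f \<in> measurable (mu \<Otimes>\<^sub>M mu) mu"
    unfolding mu_def by (rule measurable_comb_seq)
  have comb: "comb_seq (length s) \<omega> \<omega>' = conc (init \<omega> (length s)) \<omega>'" for \<omega> \<omega>'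
    by (auto simp: comb_seq_def conc_def init_def)
  have "emeasure mu (conc s ` A) = emeasure (distr (mu \<Otimes>\<^sub>M mu) mu ?f) (conc s ` A)"
    unfolding mu_def by (subst bernoulli_seq.PiM_comb_seq) (rule refl)
  also have "\<dots> = emeasure (mu \<Otimes>\<^sub>M mu) (?f -` (conc s ` A) \<inter> space (mu \<Otimes>\<^sub>M mu))"
    by (rule emeasure_distr[OF f]) (simp add: A sets_conc_image)
  also have "?f -` (conc s ` A) \<inter> space (mu \<Otimes>\<^sub>M mu) = cyl s \<times> A"
    by (auto simp: space_pair_measure comb conc_eq_conc_iff mem_cyl_iff)
  also have "emeasure (mu \<Otimes>\<^sub>M mu) (cyl s \<times> A) = emeasure mu (cyl s) * emeasure mu A"
    by (rule mu.emeasure_pair_measure_Times) (simp_all add: A)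
  finally show ?thesis .
qed

lemma measure_conc_image:
  "A \<in> sets mu \<Longrightarrow> measure mu (conc s ` A) = (1/2) ^ length s * measure mu A"
  using emeasure_conc_image[of A s] by (simp add: measure_def enn2real_mult measure_cyl[symmetric])

lemma cInt_eq_UN_cyl: "cInt A = (\<Union>s\<in>{s. cyl s \<subseteq> A}. cyl s)"
  by (auto simp: cInt_def) (metis mem_cyl_iff)

lemma sets_cInt [measurable]: "cInt A \<in> sets mu"
  unfolding cInt_eq_UN_cyl by (simp add: sets.countable_UN' countable_bool_lists)

lemma cCl_eq_Compl_cInt: "cCl A = - cInt (- A)"
  by (auto simp: cCl_def cInt_def)

lemma sets_cCl [measurable]: "cCl A \<in> sets mu"
  unfolding cCl_eq_Compl_cInt Compl_eq_Diff_UNIV by (metis sets.compl_sets sets_cInt space_mu)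

lemma cInt_subset: "cInt A \<subseteq> A"
  by (auto simp: cInt_def)

lemma subset_cCl: "A \<subseteq> cCl A"
  by (auto simp: cCl_def) (metis disjoint_iff mem_cyl_init)


section \<open>Stretching\<close>

text \<open>\<open>triangle n = 1 + \<dots> + n\<close> is the length of the stretch of a sequence of length \<open>n\<close>;
  position \<open>triangle j + k\<close> with \<open>k \<le> j\<close> is the \<open>k\<close>-th copy of entry \<open>j\<close>.\<close>

fun triangle :: "nat \<Rightarrow> nat" where
  "triangle 0 = 0"
| "triangle (Suc n) = triangle n + Suc n"

lemma strict_mono_triangle: "strict_mono triangle"
  by (rule strict_monoI_Suc) simp

lemma triangle_mono: "m \<le> n \<Longrightarrow> triangle m \<le> triangle n"
  using strict_mono_triangle by (simp add: strict_mono_less_eq)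

lemma le_triangle: "n \<le> triangle n"
  by (induction n) auto

lemma triangle_decomp_less:
  "i < triangle n \<Longrightarrow> \<exists>j k. j < n \<and> k \<le> j \<and> i = triangle j + k"
proof (induction n)
  case (Suc n)
  show ?case
  proof (cases "i < triangle n")
    case True then show ?thesis using Suc.IH by (meson less_SucI)
  next
    case False then show ?thesis
      using Suc.prems by (intro exI[of _ n] exI[of _ "i - triangle n"]) auto
  qed
qed simp

lemma triangle_decomp: "\<exists>n k. k \<le> n \<and> m = triangle n + k"
  using triangle_decomp_less[of m "Suc m"] le_triangle[of m] by auto

lemma stretch_list_snoc:
  "stretch_list (t @ [c]) = stretch_list t @ replicate (Suc (length t)) c"
proof -
  have prefix_blocks: "map (\<lambda>j. replicate (Suc j) ((t @ [c]) ! j)) [0..<length t]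
      = map (\<lambda>j. replicate (Suc j) (t ! j)) [0..<length t]"
    by (rule map_cong[OF refl]) (simp add: nth_append)
  have "stretch_list (t @ [c])
      = concat (map (\<lambda>j. replicate (Suc j) ((t @ [c]) ! j)) [0..<length t]) @ replicate (Suc (length t)) c"
    by (simp add: stretch_list_def del: replicate_Suc)
  then show ?thesis
    unfolding prefix_blocks stretch_list_def by (simp del: replicate_Suc)
qed

lemma stretch_list_Nil [simp]: "stretch_list [] = []"
  by (simp add: stretch_list_def)

lemma length_stretch_list [simp]: "length (stretch_list t) = triangle (length t)"
  by (induction t rule: rev_induct) (auto simp: stretch_list_snoc)

lemma nth_stretch_list:
  "j < length t \<Longrightarrow> k \<le> j \<Longrightarrow> stretch_list t ! (triangle j + k) = t ! j"
proof (induction t rule: rev_induct)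
  case (snoc c t)
  show ?case
  proof (cases "j < length t")
    case True
    then have "triangle j + k < triangle (length t)"
      using snoc.prems triangle_mono[of "Suc j" "length t"] by simp
    then show ?thesis using snoc True by (simp add: stretch_list_snoc nth_append)
  next
    case False
    with snoc.prems have "j = length t" by simp
    with snoc.prems show ?thesis
      by (simp add: stretch_list_snoc nth_append nth_Cons' del: replicate_Suc)
  qed
qed simp

lemma stretch_list_inject:
  "length s = length s' \<Longrightarrow> stretch_list s = stretch_list s' \<Longrightarrow> s = s'"
  by (rule nth_equalityI) (metis nth_stretch_list add_0_right le0)+

lemma take_stretch_list:
  "n \<le> length t \<Longrightarrow> take (triangle n) (stretch_list t) = stretch_list (take n t)"
proof (rule nth_equalityI)
  assume n: "n \<le> length t"
  then show "length (take (triangle n) (stretch_list t)) = length (stretch_list (take n t))"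
    using triangle_mono[OF n] by (simp add: min_def)
  fix i assume "i < length (take (triangle n) (stretch_list t))"
  then have i: "i < triangle n" by simp
  then obtain j k where "j < n" "k \<le> j" "i = triangle j + k"
    using triangle_decomp_less by blast
  with n i show "take (triangle n) (stretch_list t) ! i = stretch_list (take n t) ! i"
    by (simp add: nth_stretch_list)
qed

lemma stretch_nth: "k \<le> j \<Longrightarrow> stretch x (triangle j + k) = x j"
  using le_triangle[of j] nth_stretch_list[of j "init x (Suc (triangle j + k))" k]
  by (simp add: stretch_def)

lemma init_triangle_eq_stretch_list:
  assumes "\<And>j k. j < n \<Longrightarrow> k \<le> j \<Longrightarrow> z (triangle j + k) = z (triangle j)"
  shows "init z (triangle n) = stretch_list (init (\<lambda>j. z (triangle j)) n)"
proof (rule nth_equalityI)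
  fix i assume "i < length (init z (triangle n))"
  then have i: "i < triangle n" by simp
  then obtain j k where jk: "j < n" "k \<le> j" "i = triangle j + k"
    using triangle_decomp_less by blast
  then have "stretch_list (init (\<lambda>j. z (triangle j)) n) ! i = z (triangle j)"
    using nth_stretch_list[of j "init (\<lambda>j. z (triangle j)) n" k] by simp
  with i jk assms show "init z (triangle n) ! i = stretch_list (init (\<lambda>j. z (triangle j)) n) ! i"
    by simp
qed simp

lemma init_stretch: "init (stretch x) (triangle n) = stretch_list (init x n)"
proof -
  have "stretch x (triangle j) = x j" for j
    using stretch_nth[of 0 j] by simp
  then show ?thesis
    using init_triangle_eq_stretch_list[of n "stretch x"] by (simp add: stretch_nth)
qed

lemma init_stretch_add:
  assumes k: "k \<le> Suc n"
  shows "init (stretch x) (triangle n + k) = stretch_list (init x n) @ replicate k (x n)"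
proof -
  have "init (shift (triangle n) (stretch x)) k = replicate k (x n)"
  proof (rule nth_equalityI)
    fix i assume "i < length (init (shift (triangle n) (stretch x)) k)"
    with k show "init (shift (triangle n) (stretch x)) k ! i = replicate k (x n) ! i"
      using stretch_nth[of i n x] by (simp add: shift_def add.commute)
  qed simp
  then show ?thesis by (simp add: init_add init_stretch)
qed

lemma stretch_triangle_blocks:
  assumes "\<And>j k. k \<le> j \<Longrightarrow> z (triangle j + k) = z (triangle j)"
  shows "z = stretch (\<lambda>j. z (triangle j))"
proof
  fix m
  obtain j k where "k \<le> j" "m = triangle j + k"
    using triangle_decomp by blast
  with assms show "z m = stretch (\<lambda>j. z (triangle j)) m"
    by (simp add: stretch_nth)
qed

section \<open>The shape of the offspring\<close>

lemma length_Fl: "a \<in> Fl n \<Longrightarrow> length a = Suc n"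
  by (simp add: Fl_def)

lemma replicate_notin_Fl: "replicate (Suc n) c \<notin> Fl n"
  by (cases c) (auto simp: Fl_def)

text \<open>A point of the piece \<open>stretch_list t @ a\<close> cannot continue a longer stretched sequence,
  because the block that would follow \<open>stretch_list t\<close> is constant but \<open>a\<close> is not.\<close>

lemma length_le_if_piece_Int_cyl_stretch_list:
  assumes z: "z \<in> cyl (stretch_list t @ a)" and a: "a \<in> Fl (length t)"
    and z': "z \<in> cyl (stretch_list u)"
  shows "length u \<le> length t"
proof (rule ccontr)
  let ?n = "length t"
  assume "\<not> length u \<le> ?n"
  then have n: "Suc ?n \<le> length u" by simp
  have "init z (triangle (Suc ?n)) = stretch_list t @ a"
    using z a by (simp add: mem_cyl_iff length_Fl)
  moreover have "init z (triangle (Suc ?n)) = take (triangle (Suc ?n)) (stretch_list u)"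
    using z' init_take[OF triangle_mono[OF n], of z] by (simp add: mem_cyl_iff)
  moreover have "take (triangle (Suc ?n)) (stretch_list u) = stretch_list (take ?n u @ [u ! ?n])"
    using n by (simp only: take_stretch_list[OF n] take_Suc_conv_app_nth[symmetric] Suc_le_lessD)
  ultimately have "stretch_list t @ a = stretch_list (take ?n u) @ replicate (Suc ?n) (u ! ?n)"
    using n by (simp add: stretch_list_snoc del: replicate_Suc)
  moreover have "length (stretch_list t) = length (stretch_list (take ?n u))"
    using n by simp
  ultimately have "a = replicate (Suc ?n) (u ! ?n)"
    using append_eq_append_conv by blast
  with a replicate_notin_Fl show False by simp
qed

lemma piece_unique:
  assumes "z \<in> cyl (stretch_list t @ a)" "a \<in> Fl (length t)"
    and "z \<in> cyl (stretch_list t' @ a')" "a' \<in> Fl (length t')"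
  shows "t = t' \<and> a = a'"
proof -
  have "length t = length t'"
    using length_le_if_piece_Int_cyl_stretch_list[OF assms(1,2)]
      length_le_if_piece_Int_cyl_stretch_list[OF assms(3,4)] assms cyl_append_subset
    by (meson antisym subsetD)
  with assms have "stretch_list t = stretch_list t' \<and> a = a'"
    by (simp add: mem_cyl_iff length_Fl)
  with \<open>length t = length t'\<close> show ?thesis
    using stretch_list_inject by blast
qed

lemma stretch_notin_piece:
  assumes a: "a \<in> Fl (length t)"
  shows "stretch y \<notin> cyl (stretch_list t @ a)"
proof
  assume z: "stretch y \<in> cyl (stretch_list t @ a)"
  have "stretch y \<in> cyl (stretch_list (init y (Suc (length t))))"
    by (simp only: mem_cyl_iff length_stretch_list length_init init_stretch)
  from length_le_if_piece_Int_cyl_stretch_list[OF z a this] show False by simp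
qed

lemma stretch_image_branches:
  "stretch ` branches T = (\<Inter>n. {z. init z (triangle n) \<in> stretch_list ` T})"
proof (intro set_eqI iffI)
  fix z assume "z \<in> stretch ` branches T"
  then show "z \<in> (\<Inter>n. {z. init z (triangle n) \<in> stretch_list ` T})"
    by (auto simp: init_stretch branches_def)
next
  fix z assume "z \<in> (\<Inter>n. {z. init z (triangle n) \<in> stretch_list ` T})"
  then have "\<forall>n. \<exists>t\<in>T. init z (triangle n) = stretch_list t" by blast
  then obtain t where t: "\<And>n. t n \<in> T" "\<And>n. init z (triangle n) = stretch_list (t n)"
    by metis
  have length_t: "length (t n) = n" for n
    using arg_cong[OF t(2)[of n], of length] strict_mono_eq[OF strict_mono_triangle] by simp
  have block: "z (triangle j + k) = t (Suc j) ! j" if "k \<le> j" for j k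
  proof -
    have "triangle j + k < triangle (Suc j)" using that by simp
    then have "z (triangle j + k) = init z (triangle (Suc j)) ! (triangle j + k)" by simp
    also have "\<dots> = t (Suc j) ! j"
      using t(2)[of "Suc j"] nth_stretch_list[of j "t (Suc j)" k] that length_t[of "Suc j"] by simp
    finally show ?thesis .
  qed
  define x where "x = (\<lambda>j. z (triangle j))"
  have z: "z = stretch x"
  proof (unfold x_def, rule stretch_triangle_blocks)
    fix j k :: nat assume "k \<le> j"
    then show "z (triangle j + k) = z (triangle j)"
      using block[of k j] block[of 0 j] by simp
  qed
  have "init x n = t n" for n
  proof (rule stretch_list_inject)
    show "stretch_list (init x n) = stretch_list (t n)"
      using t(2)[of n] z by (simp add: init_stretch)
  qed (simp add: length_t)
  with t(1) z show "z \<in> stretch ` branches T"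
    by (auto simp: branches_def)
qed

lemma sets_stretch_image_branches [measurable]: "stretch ` branches T \<in> sets mu"
  unfolding stretch_image_branches
  by (rule sets.countable_INT') (auto intro: sets_init_preimage)

text \<open>The \<open>2 ^ n\<close> cylinders of the stretches of length-\<open>n\<close> sequences cover all stretched points
  and have total measure \<open>2 ^ n * 2 ^ - triangle n \<le> 2 * 2 ^ - n\<close>.\<close>

lemma null_sets_stretch_image_branches: "stretch ` branches T \<in> null_sets mu"
proof -
  let ?S = "stretch ` branches T"
  have le: "measure mu ?S \<le> 2 * (1/2) ^ n" for n
  proof -
    let ?L = "{t::bool list. length t = n}"
    have "?S \<subseteq> (\<Union>t\<in>?L. cyl (stretch_list t))"
    proof
      fix z assume "z \<in> ?S"
      then obtain y where "z = stretch y" by blast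
      moreover have "stretch y \<in> cyl (stretch_list (init y n))"
        by (simp only: mem_cyl_iff length_stretch_list length_init init_stretch)
      ultimately show "z \<in> (\<Union>t\<in>?L. cyl (stretch_list t))"
        by (intro UN_I[of "init y n"]) simp_all
    qed
    then have "measure mu ?S \<le> measure mu (\<Union>t\<in>?L. cyl (stretch_list t))"
      by (intro mu.finite_measure_mono) (auto intro!: sets.finite_UN simp: finite_list_length)
    also have "\<dots> \<le> (\<Sum>t\<in>?L. measure mu (cyl (stretch_list t)))"
      by (rule measure_UNION_le) (auto simp: finite_list_length)
    also have "\<dots> = 2 ^ n * (1/2) ^ triangle n"
    proof -
      have "card ?L = 2 ^ n"
        using card_lists_length_eq[of "UNIV :: bool set" n] by simp
      then show ?thesis by (simp add: measure_cyl)
    qed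
    also have "\<dots> \<le> 2 * (1/2) ^ n"
    proof -
      have "2 * n \<le> triangle n + 1" by (induction n) auto
      then have "(2::real) ^ (2 * n) \<le> 2 ^ (triangle n + 1)"
        by (rule power_increasing) simp
      moreover have "(2::real) ^ (2 * n) = 2 ^ n * 2 ^ n"
        by (simp only: mult_2 power_add)
      ultimately have "(2::real) ^ n * 2 ^ n \<le> 2 * 2 ^ triangle n"
        by simp
      then show ?thesis by (simp add: power_one_over field_simps)
    qed
    finally show ?thesis .
  qed
  have "(\<lambda>n. 2 * (1/2::real) ^ n) \<longlonglongrightarrow> 2 * 0"
    by (intro tendsto_mult tendsto_const LIMSEQ_power_zero) simp
  moreover have "\<exists>N. \<forall>n\<ge>N. measure mu ?S \<le> 2 * (1/2) ^ n"
    using le by blast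
  ultimately have "measure mu ?S \<le> 2 * 0"
    by (rule LIMSEQ_le_const)
  then have "measure mu ?S = 0"
    using measure_nonneg[of mu ?S] by linarith
  then show ?thesis
    by (intro null_setsI) (simp_all add: mu.emeasure_eq_measure)
qed

lemma sets_closed_offspring [measurable]: "closed_offspring T D \<in> sets mu"
  unfolding closed_offspring_def
  by (intro sets.Un sets_stretch_image_branches sets.countable_UN' countable_bool_lists)
    (auto intro!: sets_conc_image)

lemma sets_open_offspring [measurable]: "open_offspring T D \<in> sets mu"
  unfolding open_offspring_def
  by (intro sets.countable_UN' countable_bool_lists) (auto intro!: sets_conc_image)

lemma open_offspring_subset_closed_offspring: "open_offspring T D \<subseteq> closed_offspring T D"
proof -
  have "open_offspring T D \<subseteq> (\<Union>t\<in>T. \<Union>a\<in>Fl (length t). conc (stretch_list t @ a) ` cCl (D t))"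
    unfolding open_offspring_def
    by (intro UN_mono image_mono order_trans[OF cInt_subset subset_cCl] order_refl)
  then show ?thesis
    unfolding closed_offspring_def by blast
qed

lemma closed_offspring_diff_open_offspring:
  "closed_offspring T D - open_offspring T D \<subseteq> stretch ` branches T \<union>
     (\<Union>t\<in>T. \<Union>a\<in>Fl (length t). conc (stretch_list t @ a) ` (cCl (D t) - cInt (D t)))"
proof
  fix z assume z: "z \<in> closed_offspring T D - open_offspring T D"
  show "z \<in> stretch ` branches T \<union>
     (\<Union>t\<in>T. \<Union>a\<in>Fl (length t). conc (stretch_list t @ a) ` (cCl (D t) - cInt (D t)))"
  proof (cases "z \<in> stretch ` branches T")
    case False
    with z obtain t a w where
      "t \<in> T" "a \<in> Fl (length t)" "w \<in> cCl (D t)" "z = conc (stretch_list t @ a) w"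
      unfolding closed_offspring_def by blast
    moreover from this z have "w \<notin> cInt (D t)"
      unfolding open_offspring_def by blast
    ultimately show ?thesis by blast
  qed blast
qed

lemma null_sets_conc_image_cCl_diff_cInt:
  assumes "measure mu (cInt A) = measure mu (cCl A)"
  shows "conc s ` (cCl A - cInt A) \<in> null_sets mu"
proof -
  have "measure mu (cCl A - cInt A) = measure mu (cCl A) - measure mu (cInt A)"
    using cInt_subset subset_cCl by (intro mu.finite_measure_Diff) auto
  with assms have "measure mu (conc s ` (cCl A - cInt A)) = 0"
    by (simp add: measure_conc_image)
  then show ?thesis
    by (intro null_setsI) (simp_all add: mu.emeasure_eq_measure sets_conc_image)
qed

lemma dens_seq_closed_offspring_eq_open_offspring:
  assumes "\<forall>t\<in>T. measure mu (cInt (D t)) = measure mu (cCl (D t))"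
  shows "dens_seq (closed_offspring T D) z = dens_seq (open_offspring T D) z"
proof -
  let ?K = "closed_offspring T D" and ?O = "open_offspring T D"
  have "?K - ?O \<in> null_sets mu"
    using closed_offspring_diff_open_offspring
    by (rule null_sets_subset[rotated 2])
      (use assms in \<open>auto intro!: null_sets.Un null_sets_stretch_image_branches null_sets_UN'
          countable_bool_lists null_sets_conc_image_cCl_diff_cInt\<close>)
  then have "measure mu (?K \<inter> cyl s) = measure mu (?O \<inter> cyl s)" for s
    using open_offspring_subset_closed_offspring
    by (intro measure_eq_AE AE_I'[of "?K - ?O"]) auto
  then show ?thesis by (simp add: dens_seq_def fun_eq_iff)
qed

lemma closed_offspring_Int_piece:
  assumes t: "t \<in> T" and a: "a \<in> Fl (length t)"
  shows "closed_offspring T D \<inter> cyl (stretch_list t @ a) = conc (stretch_list t @ a) ` cCl (D t)"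
proof (intro equalityI subsetI)
  fix z assume z: "z \<in> closed_offspring T D \<inter> cyl (stretch_list t @ a)"
  with a stretch_notin_piece obtain t' a' w where
    "t' \<in> T" "a' \<in> Fl (length t')" "w \<in> cCl (D t')" "z = conc (stretch_list t' @ a') w"
    unfolding closed_offspring_def by blast
  with z a show "z \<in> conc (stretch_list t @ a) ` cCl (D t)"
    using piece_unique[of z t a t' a'] conc_in_cyl by blast
next
  fix z assume "z \<in> conc (stretch_list t @ a) ` cCl (D t)"
  with t a show "z \<in> closed_offspring T D \<inter> cyl (stretch_list t @ a)"
    using conc_in_cyl unfolding closed_offspring_def by blast
qed

lemma closed_offspring_Int_cyl_stretch_list:
  assumes T: "pruned_tree T" and s: "s \<notin> T"
  shows "closed_offspring T D \<inter> cyl (stretch_list s) = {}"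
proof (rule ccontr)
  assume "closed_offspring T D \<inter> cyl (stretch_list s) \<noteq> {}"
  then obtain z where z: "z \<in> closed_offspring T D" and zs: "z \<in> cyl (stretch_list s)"
    by blast
  from z consider y where "y \<in> branches T" "z = stretch y"
    | t a w where "t \<in> T" "a \<in> Fl (length t)" "w \<in> cCl (D t)" "z = conc (stretch_list t @ a) w"
    unfolding closed_offspring_def by blast
  then show False
  proof cases
    case 1
    then have "stretch_list (init y (length s)) = stretch_list s"
      using zs by (simp add: mem_cyl_iff init_stretch)
    then have "init y (length s) = s"
      using stretch_list_inject[of "init y (length s)" s] by simp
    moreover have "init y (length s) \<in> T"
      using 1(1) by (simp add: branches_def)
    ultimately show False using s by simp
  next
    case 2
    then have zt: "z \<in> cyl (stretch_list t @ a)" by (simp add: conc_in_cyl)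
    have l: "length s \<le> length t"
      using length_le_if_piece_Int_cyl_stretch_list[OF zt 2(2) zs] .
    have "init z (triangle (length t)) = stretch_list t"
      using zt cyl_append_subset by (fastforce simp: mem_cyl_iff)
    then have "stretch_list s = take (triangle (length s)) (stretch_list t)"
      using zs init_take[OF triangle_mono[OF l], of z] by (simp add: mem_cyl_iff)
    also have "\<dots> = stretch_list (take (length s) t)"
      using l by (simp add: take_stretch_list)
    finally have "s = take (length s) t"
      using l stretch_list_inject[of s "take (length s) t"] by simp
    then have "prefix s t" by (metis take_is_prefix)
    with T 2(1) s show False
      unfolding pruned_tree_def by blast
  qed
qed

section \<open>Relative measure in a cylinder\<close>

definition relative_measure :: "(nat \<Rightarrow> bool) set \<Rightarrow> bool list \<Rightarrow> real" where
  "relative_measure A s = measure mu (A \<inter> cyl s) / measure mu (cyl s)"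

lemma dens_seq_eq_relative_measure: "dens_seq A z n = relative_measure A (init z n)"
  by (simp add: dens_seq_def relative_measure_def)

lemma relative_measure_eq: "relative_measure A s = 2 ^ length s * measure mu (A \<inter> cyl s)"
  by (simp add: relative_measure_def measure_cyl power_one_over)

lemma relative_measure_nonneg: "0 \<le> relative_measure A s"
  by (simp add: relative_measure_eq)

lemma relative_measure_le_1: "A \<in> sets mu \<Longrightarrow> relative_measure A s \<le> 1"
  using mu.finite_measure_mono[of "A \<inter> cyl s" "cyl s"]
  by (simp add: relative_measure_def measure_cyl)

lemma relative_measure_Nil: "relative_measure A [] = measure mu A"
  using mu.prob_space by (simp add: relative_measure_def)

lemma relative_measure_eq_0: "A \<inter> cyl s = {} \<Longrightarrow> relative_measure A s = 0"
  by (simp add: relative_measure_def)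

lemma measure_Int_cyl_split:
  assumes A: "A \<in> sets mu"
  shows "measure mu (A \<inter> cyl p) = (\<Sum>u | length u = L. measure mu (A \<inter> cyl (p @ u)))"
proof -
  have "cyl p = (\<Union>u\<in>{u. length u = L}. cyl (p @ u))"
  proof (intro equalityI subsetI)
    fix z assume "z \<in> cyl p"
    then have "z \<in> cyl (p @ init (shift (length p) z) L)"
      by (simp add: mem_cyl_iff init_add)
    then show "z \<in> (\<Union>u\<in>{u. length u = L}. cyl (p @ u))" by force
  qed (use cyl_append_subset in blast)
  then have "A \<inter> cyl p = (\<Union>u\<in>{u. length u = L}. A \<inter> cyl (p @ u))"
    by blast
  also have "measure mu \<dots> = (\<Sum>u | length u = L. measure mu (A \<inter> cyl (p @ u)))"
  proof (rule mu.finite_measure_finite_Union)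
    show "disjoint_family_on (\<lambda>u. A \<inter> cyl (p @ u)) {u. length u = L}"
      unfolding disjoint_family_on_def by (auto simp: mem_cyl_iff)
  qed (use A in \<open>auto simp: finite_list_length\<close>)
  finally show ?thesis .
qed

lemma relative_measure_split:
  assumes "A \<in> sets mu"
  shows "relative_measure A p = (\<Sum>u | length u = L. relative_measure A (p @ u)) / 2 ^ L"
proof -
  have "(\<Sum>u | length u = L. relative_measure A (p @ u))
      = (\<Sum>u | length u = L. 2 ^ (length p + L) * measure mu (A \<inter> cyl (p @ u)))"
    by (intro sum.cong refl) (simp add: relative_measure_eq)
  also have "\<dots> = 2 ^ L * relative_measure A p"
    by (simp add: sum_distrib_left measure_Int_cyl_split[OF assms, of p L] relative_measure_eq
        power_add mult_ac)
  finally show ?thesis by simp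
qed

lemma relative_measure_split_const:
  assumes A: "A \<in> sets mu" and E: "E \<subseteq> {u. length u = L}"
    and c: "\<And>u. length u = L \<Longrightarrow> u \<notin> E \<Longrightarrow> relative_measure A (p @ u) = c"
  shows "relative_measure A p = ((\<Sum>u\<in>E. relative_measure A (p @ u)) + (2 ^ L - real (card E)) * c) / 2 ^ L"
proof -
  let ?U = "{u::bool list. length u = L}"
  have fin: "finite ?U" by (rule finite_list_length)
  have "card ?U = 2 ^ L"
    using card_lists_length_eq[of "UNIV :: bool set" L] by simp
  then have "card E \<le> 2 ^ L" "card (?U - E) = 2 ^ L - card E"
    using card_mono[OF fin E] E fin by (simp_all add: card_Diff_subset finite_subset)
  then have card: "real (card (?U - E)) = 2 ^ L - real (card E)"
    by (simp add: of_nat_diff)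
  have "(\<Sum>u\<in>?U. relative_measure A (p @ u))
      = (\<Sum>u\<in>E. relative_measure A (p @ u)) + (\<Sum>u\<in>?U - E. relative_measure A (p @ u))"
    using E fin by (metis sum.subset_diff add.commute)
  also have "(\<Sum>u\<in>?U - E. relative_measure A (p @ u)) = (2 ^ L - real (card E)) * c"
    using c card by simp
  finally show ?thesis
    using relative_measure_split[OF A, of p L] by simp
qed

lemma relative_measure_conc_image:
  assumes C: "C \<in> sets mu" and A: "A \<inter> cyl s = conc s ` C"
  shows "relative_measure A (s @ u) = relative_measure C u"
proof -
  have "A \<inter> cyl (s @ u) = A \<inter> cyl s \<inter> cyl (s @ u)"
    using cyl_append_subset by blast
  also have "\<dots> = conc s ` (C \<inter> cyl u)"
    by (simp add: A conc_image_Int_cyl)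
  finally show ?thesis
    using C by (simp add: relative_measure_eq measure_conc_image power_add power_one_over)
qed

lemma relative_measure_cCl:
  assumes A: "A \<in> sets mu" and eq: "measure mu (cInt A) = measure mu (cCl A)"
  shows "relative_measure (cCl A) u = relative_measure A u"
proof -
  let ?C = "cCl A" and ?I = "cInt A" and ?c = "cyl u"
  have IC: "?I \<subseteq> ?C" using cInt_subset subset_cCl by blast
  have "measure mu (?C \<inter> ?c) - measure mu (?I \<inter> ?c) = measure mu ((?C \<inter> ?c) - (?I \<inter> ?c))"
    using IC by (intro mu.finite_measure_Diff[symmetric]) auto
  also have "\<dots> \<le> measure mu (?C - ?I)"
    by (rule mu.finite_measure_mono) auto
  also have "\<dots> = 0"
    using IC eq by (simp add: mu.finite_measure_Diff)
  finally have "measure mu (?C \<inter> ?c) \<le> measure mu (?I \<inter> ?c)" by simp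
  moreover have "measure mu (?I \<inter> ?c) \<le> measure mu (A \<inter> ?c)"
    using cInt_subset A by (intro mu.finite_measure_mono) auto
  moreover have "measure mu (A \<inter> ?c) \<le> measure mu (?C \<inter> ?c)"
    using subset_cCl by (intro mu.finite_measure_mono) auto
  ultimately show ?thesis by (simp add: relative_measure_def)
qed

section \<open>Density along a stretched branch\<close>

lemma relative_measure_closed_offspring_piece:
  assumes "t \<in> T" "a \<in> Fl (length t)"
  shows "relative_measure (closed_offspring T D) (stretch_list t @ a) = measure mu (cCl (D t))"
  using relative_measure_conc_image[OF sets_cCl closed_offspring_Int_piece[OF assms], where u = "[]"]
  by (simp add: relative_measure_Nil)

lemma replicate_append_in_Fl:
  assumes len: "k + length u = Suc n"
    and u: "u \<noteq> replicate (length u) c"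
    and u': "0 < k \<or> u \<noteq> replicate (length u) (\<not> c)"
  shows "replicate k c @ u \<in> Fl n"
proof -
  have "replicate k c @ u \<noteq> replicate (Suc n) b" for b
  proof
    assume "replicate k c @ u = replicate (Suc n) b"
    also have "\<dots> = replicate k b @ replicate (length u) b"
      using len by (simp add: replicate_add[symmetric])
    finally have "replicate k c = replicate k b" "u = replicate (length u) b"
      by (simp_all add: append_eq_append_conv)
    with u u' show False
      by (cases "b = c") (auto simp: replicate_eq_replicate)
  qed
  with len show ?thesis by (simp add: Fl_def)
qed

text \<open>All subcylinders of depth \<open>n + 1\<close> of \<open>stretch_list (init x n)\<close> are pieces, except the
  two constant continuations.\<close>

lemma relative_measure_stretch_list_init:
  fixes D :: "bool list \<Rightarrow> (nat \<Rightarrow> bool) set"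
  assumes x: "x \<in> branches T"
  defines "K \<equiv> closed_offspring T D"
  shows "relative_measure K (stretch_list (init x n)) =
    (relative_measure K (stretch_list (init x (Suc n)))
      + relative_measure K (stretch_list (init x n @ [\<not> x n]))
      + (2 ^ Suc n - 2) * measure mu (cCl (D (init x n)))) / 2 ^ Suc n"
proof -
  let ?p = "stretch_list (init x n)"
  let ?E = "{replicate (Suc n) (x n), replicate (Suc n) (\<not> x n)}"
  have pieces: "relative_measure K (?p @ u) = measure mu (cCl (D (init x n)))"
    if "length u = Suc n" "u \<notin> ?E" for u
  proof -
    have "replicate 0 (x n) @ u \<in> Fl n"
      using that by (intro replicate_append_in_Fl) auto
    with x show ?thesis
      unfolding K_def by (intro relative_measure_closed_offspring_piece) (simp_all add: branches_def)
  qed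
  have "relative_measure K ?p =
      ((\<Sum>u\<in>?E. relative_measure K (?p @ u)) + (2 ^ Suc n - real (card ?E)) * measure mu (cCl (D (init x n))))
        / 2 ^ Suc n"
    unfolding K_def
    by (rule relative_measure_split_const[OF sets_closed_offspring _ pieces[unfolded K_def]]) auto
  moreover have "card ?E = 2"
    by (simp del: replicate_Suc)
  ultimately show ?thesis
    by (simp add: init_Suc stretch_list_snoc del: replicate_Suc)
qed

lemma relative_measure_stretch_list_init_replicate:
  fixes D :: "bool list \<Rightarrow> (nat \<Rightarrow> bool) set"
  assumes x: "x \<in> branches T" and k: "0 < k" "k \<le> n"
  defines "K \<equiv> closed_offspring T D"
  shows "relative_measure K (stretch_list (init x n) @ replicate k (x n)) =
    (relative_measure K (stretch_list (init x (Suc n)))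
      + (2 ^ (Suc n - k) - 1) * measure mu (cCl (D (init x n)))) / 2 ^ (Suc n - k)"
proof -
  let ?p = "stretch_list (init x n) @ replicate k (x n)" and ?L = "Suc n - k"
  have pieces: "relative_measure K (?p @ u) = measure mu (cCl (D (init x n)))"
    if "length u = ?L" "u \<notin> {replicate ?L (x n)}" for u
  proof -
    have "replicate k (x n) @ u \<in> Fl n"
      using that k by (intro replicate_append_in_Fl) auto
    with x show ?thesis
      unfolding K_def append_assoc
      by (intro relative_measure_closed_offspring_piece) (simp_all add: branches_def)
  qed
  have "relative_measure K ?p =
      (relative_measure K (?p @ replicate ?L (x n)) + (2 ^ ?L - 1) * measure mu (cCl (D (init x n))))
        / 2 ^ ?L"
    unfolding K_def
    using relative_measure_split_const[OF sets_closed_offspring _ pieces[unfolded K_def], of "{replicate ?L (x n)}"]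
    by simp
  moreover have "?p @ replicate ?L (x n) = stretch_list (init x (Suc n))"
    using k by (simp add: init_Suc stretch_list_snoc replicate_add[symmetric])
  ultimately show ?thesis by simp
qed

lemma dist_average_le:
  fixes F p P :: real
  assumes "1 \<le> P"
  shows "\<bar>(F + (P - 1) * p) / P - p\<bar> \<le> \<bar>F - p\<bar>"
proof -
  have "\<bar>(F + (P - 1) * p) / P - p\<bar> = \<bar>F - p\<bar> / P"
    using assms by (simp add: field_simps)
  also have "\<dots> \<le> \<bar>F - p\<bar>"
    using assms by (simp add: divide_le_eq mult_le_cancel_left1)
  finally show ?thesis .
qed

lemma dist_average2_le:
  fixes F G p P :: real
  assumes "2 \<le> P" "\<bar>G - p\<bar> \<le> 1"
  shows "\<bar>(F + G + (P - 2) * p) / P - p\<bar> \<le> \<bar>F - p\<bar> / P + 1 / P"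
proof -
  have "\<bar>(F + G + (P - 2) * p) / P - p\<bar> = \<bar>(F - p) + (G - p)\<bar> / P"
    using assms by (simp add: field_simps)
  also have "\<dots> \<le> (\<bar>F - p\<bar> + 1) / P"
    using assms by (intro divide_right_mono) (simp_all add: abs_triangle_ineq order_trans)
  finally show ?thesis by (simp add: add_divide_distrib)
qed

lemma abs_diff_measure_le_1: "0 \<le> u \<Longrightarrow> u \<le> 1 \<Longrightarrow> \<bar>u - measure mu A\<bar> \<le> 1"
  using measure_nonneg[of mu A] mu.prob_le_1[of A] by linarith

lemma dist_dens_seq_stretch_triangle_le:
  fixes D :: "bool list \<Rightarrow> (nat \<Rightarrow> bool) set"
  assumes x: "x \<in> branches T"
  defines "V \<equiv> dens_seq (closed_offspring T D) (stretch x)"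
    and "c \<equiv> \<lambda>n. measure mu (cCl (D (init x n)))"
  shows "\<bar>V (triangle n) - c n\<bar> \<le> \<bar>V (triangle (Suc n)) - c n\<bar> / 2 ^ Suc n + 1 / 2 ^ Suc n"
proof -
  let ?K = "closed_offspring T D"
  have V: "V (triangle m) = relative_measure ?K (stretch_list (init x m))" for m
    by (simp add: V_def dens_seq_eq_relative_measure init_stretch)
  have "V (triangle n) = (V (triangle (Suc n)) + relative_measure ?K (stretch_list (init x n @ [\<not> x n]))
      + (2 ^ Suc n - 2) * c n) / 2 ^ Suc n"
    unfolding V c_def by (rule relative_measure_stretch_list_init[OF x])
  then show ?thesis
    unfolding c_def
    by (simp only:) (intro dist_average2_le abs_diff_measure_le_1 relative_measure_nonneg
        relative_measure_le_1 sets_closed_offspring, simp)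
qed

lemma dist_dens_seq_stretch_le:
  fixes D :: "bool list \<Rightarrow> (nat \<Rightarrow> bool) set"
  assumes x: "x \<in> branches T"
  defines "V \<equiv> dens_seq (closed_offspring T D) (stretch x)"
    and "c \<equiv> \<lambda>n. measure mu (cCl (D (init x n)))"
  shows "\<bar>V (triangle n) - c n\<bar> \<le> (1/2) ^ n"
    and "k \<le> n \<Longrightarrow> \<bar>V (triangle n + k) - c n\<bar> \<le> \<bar>V (triangle (Suc n)) - c n\<bar> + (1/2) ^ n"
proof -
  let ?d = "\<bar>V (triangle (Suc n)) - c n\<bar>"
  have V: "V (triangle m + k) = relative_measure (closed_offspring T D) (stretch_list (init x m) @ replicate k (x m))"
    if "k \<le> Suc m" for m k
    using that by (simp add: V_def dens_seq_eq_relative_measure init_stretch_add)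
  have V_triangle: "V (triangle m) = relative_measure (closed_offspring T D) (stretch_list (init x m))" for m
    by (simp add: V_def dens_seq_eq_relative_measure init_stretch)
  have "0 \<le> V m" "V m \<le> 1" for m
    by (simp_all add: V_def dens_seq_eq_relative_measure relative_measure_nonneg relative_measure_le_1)
  then have "?d \<le> 1"
    unfolding c_def by (intro abs_diff_measure_le_1)
  then have "?d / 2 ^ Suc n \<le> 1 / 2 ^ Suc n" "?d / 2 ^ Suc n \<le> ?d"
    by (simp_all add: divide_right_mono divide_le_eq mult_le_cancel_left1 one_le_power del: power_Suc)
  moreover have "1 / 2 ^ Suc n + 1 / 2 ^ Suc n = (1/2::real) ^ n" "0 \<le> 1 / (2::real) ^ Suc n"
    by (simp_all add: power_one_over)
  moreover have V0: "\<bar>V (triangle n) - c n\<bar> \<le> ?d / 2 ^ Suc n + 1 / 2 ^ Suc n"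
    unfolding V_def c_def by (rule dist_dens_seq_stretch_triangle_le[OF x])
  ultimately show "\<bar>V (triangle n) - c n\<bar> \<le> (1/2) ^ n"
    by linarith
  assume k: "k \<le> n"
  show "\<bar>V (triangle n + k) - c n\<bar> \<le> ?d + (1/2) ^ n"
  proof (cases "k = 0")
    case True
    then have "V (triangle n + k) = V (triangle n)" by simp
    with V0 \<open>?d / 2 ^ Suc n \<le> ?d\<close> \<open>1 / 2 ^ Suc n + 1 / 2 ^ Suc n = (1/2::real) ^ n\<close>
      \<open>0 \<le> 1 / (2::real) ^ Suc n\<close> show ?thesis by linarith
  next
    case False
    with k have "V (triangle n + k) = (V (triangle (Suc n)) + (2 ^ (Suc n - k) - 1) * c n) / 2 ^ (Suc n - k)"
      unfolding V[OF le_SucI[OF k]] V_triangle c_def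
      by (intro relative_measure_stretch_list_init_replicate[OF x]) simp_all
    then have "\<bar>V (triangle n + k) - c n\<bar> \<le> ?d"
      by (simp only:) (rule dist_average_le, simp)
    then show ?thesis by (simp add: add_increasing2)
  qed
qed

lemma tendsto_of_triangle_blocks:
  fixes V e :: "nat \<Rightarrow> real"
  assumes e: "e \<longlonglongrightarrow> 0" and block: "\<And>n k. k \<le> n \<Longrightarrow> \<bar>V (triangle n + k) - l\<bar> \<le> e n"
  shows "V \<longlonglongrightarrow> l"
proof -
  obtain block_index offset
    where index: "\<And>m. offset m \<le> block_index m \<and> m = triangle (block_index m) + offset m"
    using triangle_decomp by metis
  have "filterlim block_index sequentially sequentially"
    unfolding filterlim_at_top eventually_sequentially
  proof (intro allI exI impI)
    fix N m assume "triangle N \<le> m"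
    moreover have "m < triangle (Suc (block_index m))"
      using index[of m] by simp
    ultimately show "N \<le> block_index m"
      using triangle_mono[of "Suc (block_index m)" N] by (metis not_less_eq_eq order.strict_trans2 not_le)
  qed
  then have "(\<lambda>m. e (block_index m)) \<longlonglongrightarrow> 0"
    by (rule filterlim_compose[OF e])
  moreover have "\<bar>V m - l\<bar> \<le> e (block_index m)" for m
    using block[of "offset m" "block_index m"] index[of m] by simp
  ultimately have "(\<lambda>m. V m - l) \<longlonglongrightarrow> 0"
    by (auto intro: Lim_null_comparison[of _ "\<lambda>m. e (block_index m)"])
  then show ?thesis by (rule LIM_zero_cancel)
qed

lemma tendsto_iff_tendsto_triangle_blocks:
  fixes V a :: "nat \<Rightarrow> real"
  assumes block: "\<And>n k. k \<le> n \<Longrightarrow> \<bar>V (triangle n + k) - a n\<bar> \<le> \<bar>V (triangle (Suc n)) - a n\<bar> + (1/2) ^ n"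
    and start: "\<And>n. \<bar>V (triangle n) - a n\<bar> \<le> (1/2) ^ n"
  shows "V \<longlonglongrightarrow> l \<longleftrightarrow> a \<longlonglongrightarrow> l"
proof
  let ?F = "\<lambda>n. V (triangle n)"
  have geometric: "(\<lambda>n. (1/2::real) ^ n) \<longlonglongrightarrow> 0"
    by (rule LIMSEQ_power_zero) simp
  have Fa: "(\<lambda>n. ?F n - a n) \<longlonglongrightarrow> 0"
    by (rule Lim_null_comparison[OF _ geometric]) (simp add: start)
  show "a \<longlonglongrightarrow> l" if V: "V \<longlonglongrightarrow> l"
  proof -
    have "?F \<longlonglongrightarrow> l"
      using LIMSEQ_subseq_LIMSEQ[OF V strict_mono_triangle] by (simp add: comp_def)
    then have "(\<lambda>n. ?F n - (?F n - a n)) \<longlonglongrightarrow> l - 0"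
      by (intro tendsto_diff Fa)
    then show ?thesis by simp
  qed
  show "V \<longlonglongrightarrow> l" if a: "a \<longlonglongrightarrow> l"
  proof (rule tendsto_of_triangle_blocks)
    have "(\<lambda>n. (?F n - a n) + a n) \<longlonglongrightarrow> 0 + l"
      by (intro tendsto_add Fa a)
    then have F: "?F \<longlonglongrightarrow> l" by simp
    have "(\<lambda>n. \<bar>?F (Suc n) - l\<bar> + 2 * \<bar>a n - l\<bar> + (1/2) ^ n) \<longlonglongrightarrow> \<bar>l - l\<bar> + 2 * \<bar>l - l\<bar> + 0"
      by (intro tendsto_intros LIMSEQ_Suc[OF F] a geometric)
    then show "(\<lambda>n. \<bar>?F (Suc n) - l\<bar> + 2 * \<bar>a n - l\<bar> + (1/2) ^ n) \<longlonglongrightarrow> 0"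
      by simp
    fix n k :: nat assume "k \<le> n"
    moreover have "\<bar>V (triangle n + k) - l\<bar> \<le> \<bar>V (triangle n + k) - a n\<bar> + \<bar>a n - l\<bar>"
      "\<bar>?F (Suc n) - a n\<bar> \<le> \<bar>?F (Suc n) - l\<bar> + \<bar>a n - l\<bar>"
      using abs_triangle_ineq[of "V (triangle n + k) - a n" "a n - l"]
        abs_triangle_ineq[of "?F (Suc n) - l" "l - a n"] by (simp_all add: abs_minus_commute)
    ultimately show "\<bar>V (triangle n + k) - l\<bar> \<le> \<bar>?F (Suc n) - l\<bar> + 2 * \<bar>a n - l\<bar> + (1/2) ^ n"
      using block[OF \<open>k \<le> n\<close>] by linarith
  qed
qed

lemma dens_seq_closed_offspring_stretch_tendsto_iff:
  assumes "x \<in> branches T"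
  shows "dens_seq (closed_offspring T D) (stretch x) \<longlonglongrightarrow> l
    \<longleftrightarrow> (\<lambda>n. measure mu (cCl (D (init x n)))) \<longlonglongrightarrow> l"
  using dist_dens_seq_stretch_le(2)[OF assms] dist_dens_seq_stretch_le(1)[OF assms]
  by (rule tendsto_iff_tendsto_triangle_blocks)


section \<open>Density off the stretched branches\<close>

lemma dens_seq_closed_offspring_tendsto_0:
  assumes "pruned_tree T" "s \<notin> T" and z: "z \<in> cyl (stretch_list s)"
  shows "dens_seq (closed_offspring T D) z \<longlonglongrightarrow> 0"
proof -
  let ?N = "triangle (length s)"
  have "dens_seq (closed_offspring T D) z (i + ?N) = 0" for i
  proof -
    have "init z (?N + i) = stretch_list s @ init (shift ?N z) i"
      using z by (simp add: init_add mem_cyl_iff)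
    then have "cyl (init z (i + ?N)) \<subseteq> cyl (stretch_list s)"
      using cyl_append_subset by (simp add: add.commute)
    then have "closed_offspring T D \<inter> cyl (init z (i + ?N)) = {}"
      using closed_offspring_Int_cyl_stretch_list[OF assms(1,2), of D] by blast
    then show ?thesis
      by (simp add: dens_seq_eq_relative_measure relative_measure_eq_0)
  qed
  then have "(\<lambda>i. dens_seq (closed_offspring T D) z (i + ?N)) \<longlonglongrightarrow> 0"
    by simp
  then show ?thesis
    by (rule LIMSEQ_offset)
qed

text \<open>Inside a piece the offspring is a rescaled copy of \<open>cCl (D t)\<close>, whose relative measures
  are those of \<open>D t\<close>.\<close>

lemma dens_seq_closed_offspring_piece_tendsto:
  assumes t: "t \<in> T" and a: "a \<in> Fl (length t)" and z: "z \<in> cyl (stretch_list t @ a)"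
    and D: "dualistic (D t)" "measure mu (cInt (D t)) = measure mu (cCl (D t))"
  shows "dens_seq (closed_offspring T D) z \<longlonglongrightarrow> dens (D t) (shift (length (stretch_list t @ a)) z)"
proof -
  let ?s = "stretch_list t @ a"
  let ?w = "shift (length ?s) z"
  have "dens_seq (closed_offspring T D) z (i + length ?s) = dens_seq (D t) ?w i" for i
  proof -
    have "init z (length ?s + i) = ?s @ init ?w i"
      using z by (simp only: init_add mem_cyl_iff)
    then have "dens_seq (closed_offspring T D) z (i + length ?s)
        = relative_measure (closed_offspring T D) (?s @ init ?w i)"
      by (simp add: dens_seq_eq_relative_measure add.commute)
    also have "\<dots> = relative_measure (cCl (D t)) (init ?w i)"
      by (rule relative_measure_conc_image[OF sets_cCl closed_offspring_Int_piece[OF t a]])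
    also have "\<dots> = dens_seq (D t) ?w i"
      using D by (simp add: relative_measure_cCl dualistic_def dens_seq_eq_relative_measure)
    finally show ?thesis .
  qed
  moreover have "dens_seq (D t) ?w \<longlonglongrightarrow> dens (D t) ?w"
    using D by (simp add: dualistic_def dens_defined_def dens_def convergent_LIMSEQ_iff)
  ultimately have "(\<lambda>i. dens_seq (closed_offspring T D) z (i + length ?s))
      \<longlonglongrightarrow> dens (D t) ?w"
    by simp
  then show ?thesis
    by (rule LIMSEQ_offset)
qed

lemma dens_seq_closed_offspring_off_branches:
  assumes T: "pruned_tree T" and D: "compliant T D" and z: "z \<notin> stretch ` branches T"
  shows "\<exists>L\<in>{0, 1}. dens_seq (closed_offspring T D) z \<longlonglongrightarrow> L"
proof -
  define x where "x = (\<lambda>j. z (triangle j))"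
  let ?const = "\<lambda>j. \<forall>k\<le>j. z (triangle j + k) = z (triangle j)"
  have outside: "\<exists>L\<in>{0, 1}. dens_seq (closed_offspring T D) z \<longlonglongrightarrow> L"
    if "\<forall>j<n. ?const j" "init x n \<notin> T" for n
  proof -
    have "z \<in> cyl (stretch_list (init x n))"
      unfolding mem_cyl_iff x_def length_stretch_list length_init
      by (rule init_triangle_eq_stretch_list) (use that in auto)
    then show ?thesis
      using dens_seq_closed_offspring_tendsto_0[OF T that(2)] by blast
  qed
  show ?thesis
  proof (cases "\<forall>j. ?const j")
    case True
    have "z = stretch x"
      unfolding x_def
    proof (rule stretch_triangle_blocks)
      fix j k :: nat assume "k \<le> j"
      with True show "z (triangle j + k) = z (triangle j)" by blast
    qed
    with z have "x \<notin> branches T" by blast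
    then obtain n where "init x n \<notin> T"
      by (auto simp: branches_def)
    with True outside show ?thesis by blast
  next
    case False
    define j where "j = (LEAST j. \<not> ?const j)"
    have "\<not> ?const j"
      unfolding j_def by (rule LeastI_ex) (use False in blast)
    have "\<forall>i<j. ?const i"
      unfolding j_def using not_less_Least by blast
    show ?thesis
    proof (cases "init x j \<in> T")
      case False with \<open>\<forall>i<j. ?const i\<close> outside show ?thesis by blast
    next
      case True
      define a where "a = init (shift (triangle j) z) (Suc j)"
      have "a \<in> Fl j"
      proof -
        obtain k where "k \<le> j" "z (triangle j + k) \<noteq> z (triangle j)"
          using \<open>\<not> ?const j\<close> by blast
        then have "a ! k \<noteq> a ! 0"
          by (simp add: a_def shift_def add.commute)
        then have "a \<noteq> replicate (Suc j) b" for b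
          using \<open>k \<le> j\<close> by (metis le_imp_less_Suc nth_replicate zero_less_Suc)
        then show ?thesis by (simp add: Fl_def a_def)
      qed
      have "init z (triangle j) = stretch_list (init x j)"
        unfolding x_def by (rule init_triangle_eq_stretch_list) (use \<open>\<forall>i<j. ?const i\<close> in auto)
      then have "init z (triangle j + Suc j) = stretch_list (init x j) @ a"
        by (simp only: init_add a_def)
      then have "z \<in> cyl (stretch_list (init x j) @ a)"
        by (simp add: mem_cyl_iff a_def)
      moreover have "dualistic (D (init x j))" "measure mu (cInt (D (init x j))) = measure mu (cCl (D (init x j)))"
        using D True by (simp_all add: compliant_def)
      ultimately have "dens_seq (closed_offspring T D) z
          \<longlonglongrightarrow> dens (D (init x j)) (shift (length (stretch_list (init x j) @ a)) z)"
        using \<open>a \<in> Fl j\<close> by (intro dens_seq_closed_offspring_piece_tendsto[OF True]) simp_all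
      moreover have "dens (D (init x j)) (shift (length (stretch_list (init x j) @ a)) z) \<in> {0, 1}"
        using \<open>dualistic (D (init x j))\<close> by (simp add: dualistic_def)
      ultimately show ?thesis by blast
    qed
  qed
qed

section \<open>The density of the offspring\<close>

theorem theorem3p13:
  fixes T :: "bool list set" and \<psi> :: "bool list \<Rightarrow> real"
    and D :: "bool list \<Rightarrow> (nat \<Rightarrow> bool) set"
  assumes "pruned_tree T"
    and "\<forall>t\<in>T. 0 < \<psi> t \<and> \<psi> t < 1"
    and "compliant T D"
    and "\<forall>t\<in>T. measure mu (cInt (D t)) = \<psi> t \<and> measure mu (cCl (D t)) = \<psi> t"
  shows "(\<forall>z. dens_seq (closed_offspring T D) z = dens_seq (open_offspring T D) z) \<and>
    (\<forall>z. z \<notin> stretch ` branches T \<longrightarrow>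
        dens_defined (closed_offspring T D) z \<and> dens (closed_offspring T D) z \<in> {0, 1}) \<and>
    (\<forall>x\<in>branches T.
        (dens_defined (closed_offspring T D) (stretch x) \<longleftrightarrow> convergent (\<lambda>n. \<psi> (init x n))) \<and>
        (convergent (\<lambda>n. \<psi> (init x n)) \<longrightarrow>
           dens (closed_offspring T D) (stretch x) = lim (\<lambda>n. \<psi> (init x n))))"
proof -
  let ?K = "closed_offspring T D"
  have "dens_seq ?K z = dens_seq (open_offspring T D) z" for z
    using assms(4) by (intro dens_seq_closed_offspring_eq_open_offspring) simp
  moreover have "dens_defined ?K z \<and> dens ?K z \<in> {0, 1}" if "z \<notin> stretch ` branches T" for z
    using dens_seq_closed_offspring_off_branches[OF assms(1,3) that]
    by (metis dens_def dens_defined_def convergentI limI)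
  moreover have "(dens_defined ?K (stretch x) \<longleftrightarrow> convergent (\<lambda>n. \<psi> (init x n))) \<and>
      (convergent (\<lambda>n. \<psi> (init x n)) \<longrightarrow> dens ?K (stretch x) = lim (\<lambda>n. \<psi> (init x n)))"
    if x: "x \<in> branches T" for x
  proof -
    have "measure mu (cCl (D (init x n))) = \<psi> (init x n)" for n
      using x assms(4) by (simp add: branches_def)
    then have "dens_seq ?K (stretch x) \<longlonglongrightarrow> l \<longleftrightarrow> (\<lambda>n. \<psi> (init x n)) \<longlonglongrightarrow> l" for l
      using dens_seq_closed_offspring_stretch_tendsto_iff[OF x] by simp
    then show ?thesis
      unfolding dens_defined_def dens_def convergent_def by (metis limI)
  qed
  ultimately show ?thesis by blast
qed

end
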